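(* Let $V$ be a $3$-dimensional vector space over an algebraically closed field $k$ with $\mathrm{char}\,k\ne 2$, let $\zeta\in GL(V)$, and let $G(\zeta)=\{\varphi\in GL(V)\mid \varphi\zeta\varphi^{-1}\text{ is a scalar multiple of }\zeta\}$. Then $G(\zeta)$ either coincides with the centralizer $C(\zeta)$ of $\zeta$ in $GL(V)$ or contains $C(\zeta)$ as a subgroup of index $3$. In the latter case $\mathrm{char}\,k\ne3$ and $\zeta$ has three distinct characteristic roots $\alpha_1,\alpha_2,\alpha_3$ such that $\alpha_1\alpha_2^{-1}=\alpha_2\alpha_3^{-1}=\alpha_3\alpha_1^{-1}=\epsilon$, where $\epsilon$ is a primitive cube root of $1$. *)

theory Defs
  imports "HOL-Analysis.Analysis" "HOL-Computational_Algebra.Computational_Algebra"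
begin

definition GL3 :: "('a::field ^3^3) set" where
  "GL3 = {A. invertible A}"

definition centralizer3 :: "'a::field ^3^3 \<Rightarrow> ('a^3^3) set" where
  "centralizer3 z = {p \<in> GL3. p ** z = z ** p}"

definition Gz :: "'a::field ^3^3 \<Rightarrow> ('a^3^3) set" where
  "Gz z = {p \<in> GL3. \<exists>c. p ** z ** matrix_inv p = mat c ** z}"

definition mat_index :: "('a::field ^3^3) set \<Rightarrow> ('a^3^3) set \<Rightarrow> nat" where
  "mat_index G H = card {(\<lambda>h. g ** h) ` H | g. g \<in> G}"

definition char_root :: "'a::field ^3^3 \<Rightarrow> 'a \<Rightarrow> bool" where
  "char_root z a \<longleftrightarrow> det (mat a - z) = 0"

definition subgroup3 :: "('a::field ^3^3) set \<Rightarrow> ('a^3^3) set \<Rightarrow> bool" where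
  "subgroup3 H G \<longleftrightarrow> H \<subseteq> G \<and> mat 1 \<in> H \<and> (\<forall>x\<in>H. \<forall>y\<in>H. x ** y \<in> H) \<and> (\<forall>x\<in>H. matrix_inv x \<in> H)"

end

theory Submission
  imports Defs
begin

text \<open>If \<open>p \<zeta> p\<inverse> = c \<zeta>\<close>, the multiplier \<open>c\<close> is determined by \<open>p\<close> because \<open>\<zeta>\<close> is invertible,
  taking determinants gives \<open>c\<^sup>3 = 1\<close>, and \<open>p \<mapsto> c\<close> is multiplicative with kernel \<open>C(\<zeta>)\<close>; so the
  left cosets of \<open>C(\<zeta>)\<close> in \<open>G(\<zeta>)\<close> are the fibres of \<open>p \<mapsto> c\<close>. If some \<open>p\<close> has multiplier
  \<open>\<epsilon> \<noteq> 1\<close>, then \<open>\<epsilon>\<close> is a primitive cube root of unity (impossible in characteristic 3, where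
  \<open>x\<^sup>3 - 1 = (x - 1)\<^sup>3\<close>), the fibres over \<open>1, \<epsilon>, \<epsilon>\<^sup>2\<close> are exactly the three cosets, and since \<open>\<zeta>\<close>
  is similar to \<open>\<epsilon> \<zeta>\<close>, any characteristic root \<open>\<alpha>\<close> yields the roots \<open>\<epsilon>\<^sup>2 \<alpha>, \<epsilon> \<alpha>, \<alpha>\<close>.\<close>

no_notation fps_nth (infixl "$" 75)

lemma mat_matrix_mul_nth: "(mat c ** A) $ i $ j = c * (A $ i $ j :: 'a::comm_ring_1)"
  by (simp add: matrix_matrix_mult_def mat_def if_distrib if_distribR sum.delta cong: if_cong)

lemma matrix_mat_mul_nth: "(A ** mat c) $ i $ j = (A $ i $ j :: 'a::comm_ring_1) * c"
  by (simp add: matrix_matrix_mult_def mat_def if_distrib if_distribR sum.delta' cong: if_cong)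

lemma mat_matrix_mul_commute: "mat c ** (A::'a::comm_ring_1^'n^'n) = A ** mat c"
  by (simp add: vec_eq_iff mat_matrix_mul_nth matrix_mat_mul_nth mult.commute)

lemma mat_mult_mat: "mat c ** mat d = (mat (c * d) :: 'a::comm_ring_1^'n^'n)"
  by (simp add: vec_eq_iff mat_matrix_mul_nth) (simp add: mat_def)

lemma mat_inject: "(mat c = (mat d :: 'a::zero^'n^'n)) \<longleftrightarrow> c = d"
proof
  assume "mat c = (mat d :: 'a^'n^'n)"
  then have "(mat c :: 'a^'n^'n) $ i $ i = (mat d :: 'a^'n^'n) $ i $ i" for i
    by simp
  then show "c = d" by (simp add: mat_def)
qed simp

lemma det_mat: "det (mat c :: 'a::comm_ring_1^'n^'n) = c ^ CARD('n)"
  by (simp add: det_diagonal mat_def)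

lemma matrix_diff_ldistrib: "(A::'a::comm_ring_1^'n^'m) ** (B - C) = A ** B - A ** C"
  by (simp add: vec_eq_iff matrix_matrix_mult_def algebra_simps sum_subtractf)

lemma matrix_diff_rdistrib: "((B - C)::'a::comm_ring_1^'n^'m) ** A = B ** A - C ** A"
  by (simp add: vec_eq_iff matrix_matrix_mult_def algebra_simps sum_subtractf)

lemma
  fixes A :: "'a::field^'n^'n"
  assumes "invertible A"
  shows matrix_inv_right: "A ** matrix_inv A = mat 1"
    and matrix_inv_left: "matrix_inv A ** A = mat 1"
proof -
  have "\<exists>A'. A ** A' = mat 1 \<and> A' ** A = mat 1"
    using assms invertible_def by blast
  then have "A ** matrix_inv A = mat 1 \<and> matrix_inv A ** A = mat 1"
    unfolding matrix_inv_def by (rule someI_ex)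
  then show "A ** matrix_inv A = mat 1" "matrix_inv A ** A = mat 1"
    by auto
qed

lemma invertible_matrix_inv: "invertible (A::'a::field^'n^'n) \<Longrightarrow> invertible (matrix_inv A)"
  using matrix_inv_left matrix_inv_right invertible_def by blast

lemma matrix_mul_right_cancel:
  fixes p :: "'a::field^'n^'n"
  assumes "A ** p = B ** p" "invertible p"
  shows "A = B"
  by (metis assms matrix_mul_assoc matrix_mul_rid matrix_inv_right)

lemma conjugate_eq_iff:
  fixes p :: "'a::field^'n^'n"
  assumes "invertible p"
  shows "p ** z ** matrix_inv p = M \<longleftrightarrow> p ** z = M ** p"
proof
  assume "p ** z ** matrix_inv p = M"
  then have "p ** z ** matrix_inv p ** p = M ** p" by simp
  then show "p ** z = M ** p"
    by (simp add: matrix_mul_assoc[symmetric] matrix_inv_left[OF assms])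
next
  assume "p ** z = M ** p"
  then have "p ** z ** matrix_inv p = M ** p ** matrix_inv p" by simp
  then show "p ** z ** matrix_inv p = M"
    by (simp add: matrix_mul_assoc[symmetric] matrix_inv_right[OF assms])
qed

lemma char_root_nonzero:
  fixes z :: "'a::field^3^3"
  assumes "invertible z" "char_root z a"
  shows "a \<noteq> 0"
proof
  assume "a = 0"
  moreover have "mat 0 - z = mat (-1) ** z"
    by (simp add: vec_eq_iff mat_matrix_mul_nth)
  ultimately have "det (mat (-1) ** z) = 0"
    using assms(2) by (simp add: char_root_def)
  then have "det z = 0" by (simp add: det_mul det_mat)
  then show False using assms(1) invertible_det_nz by blast
qed

lemma char_root_exists:
  fixes z :: "'a::alg_closed_field^3^3"
  shows "\<exists>a. char_root z a"
proof -
  \<comment> \<open>coefficients of the characteristic polynomial \<open>det (t I - z)\<close>\<close>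
  define f where "f k = (if k = 3 then 1 else if k = 2 then -(z$1$1 + z$2$2 + z$3$3)
     else if k = 1 then z$1$1*z$2$2 + z$1$1*z$3$3 + z$2$2*z$3$3
       - z$1$2*z$2$1 - z$1$3*z$3$1 - z$2$3*z$3$2
     else - det z)" for k :: nat
  obtain a where a: "(\<Sum>k\<le>3. f k * a ^ k) = 0"
    using alg_closed[of 3 f] by (auto simp: f_def)
  have "(\<Sum>k\<le>3. f k * a ^ k) = f 0 + f 1 * a + f 2 * a^2 + f 3 * a^3"
    by (simp add: eval_nat_numeral)
  also have "\<dots> = det (mat a - z)"
    unfolding f_def det_3 by (simp add: mat_def power2_eq_square power3_eq_cube algebra_simps)
  finally show ?thesis using a char_root_def by metis
qed

definition scaling_conjugators :: "'a::field^'n^'n \<Rightarrow> 'a \<Rightarrow> ('a^'n^'n) set" where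
  "scaling_conjugators z c = {p. invertible p \<and> p ** z = mat c ** z ** p}"

lemma scaling_conjugators_one: "mat 1 \<in> scaling_conjugators z 1"
  by (simp add: scaling_conjugators_def invertible_def)

lemma scaling_conjugators_mult:
  assumes "p \<in> scaling_conjugators z c" and "q \<in> scaling_conjugators z d"
  shows "p ** q \<in> scaling_conjugators z (c * d)"
proof -
  have p: "invertible p" "p ** z = mat c ** z ** p"
    and q: "invertible q" "q ** z = mat d ** z ** q"
    using assms by (auto simp: scaling_conjugators_def)
  have "p ** q ** z = p ** (q ** z)"
    by (simp add: matrix_mul_assoc)
  also have "\<dots> = p ** mat d ** z ** q"
    by (simp add: q(2) matrix_mul_assoc)
  also have "\<dots> = mat d ** (p ** z) ** q"
    by (simp add: mat_matrix_mul_commute matrix_mul_assoc)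
  also have "\<dots> = mat (c * d) ** z ** (p ** q)"
    by (simp add: p(2) matrix_mul_assoc mat_mult_mat mult.commute)
  finally show ?thesis
    using p(1) q(1) invertible_mult by (auto simp: scaling_conjugators_def)
qed

lemma scaling_conjugators_inverse:
  assumes "p \<in> scaling_conjugators z c" and "c \<noteq> 0"
  shows "matrix_inv p \<in> scaling_conjugators z (inverse c)"
proof -
  let ?i = "matrix_inv p"
  have p: "invertible p" "p ** z = mat c ** z ** p"
    using assms(1) by (auto simp: scaling_conjugators_def)
  have "z ** ?i = ?i ** (p ** z) ** ?i"
    by (simp add: matrix_mul_assoc matrix_inv_left[OF p(1)])
  also have "\<dots> = ?i ** mat c ** z ** (p ** ?i)"
    by (simp add: p(2) matrix_mul_assoc)
  also have "\<dots> = mat c ** ?i ** z"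
    by (simp add: matrix_inv_right[OF p(1)] mat_matrix_mul_commute)
  finally have z_i: "z ** ?i = mat c ** ?i ** z" .
  have "mat (inverse c) ** z ** ?i = mat (inverse c) ** (mat c ** ?i ** z)"
    by (simp add: z_i[symmetric] matrix_mul_assoc)
  also have "\<dots> = ?i ** z"
    using assms(2) by (simp add: matrix_mul_assoc mat_mult_mat)
  finally show ?thesis
    using invertible_matrix_inv[OF p(1)] by (simp add: scaling_conjugators_def)
qed

lemma scaling_conjugators_unique:
  assumes "invertible z" "p \<in> scaling_conjugators z c" "p \<in> scaling_conjugators z d"
  shows "c = d"
proof -
  have "mat c ** z ** p = mat d ** z ** p" and "invertible p"
    using assms(2,3) by (auto simp: scaling_conjugators_def)
  then have "mat c ** z = mat d ** z"
    by (rule matrix_mul_right_cancel)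
  then show ?thesis
    using assms(1) matrix_mul_right_cancel mat_inject by blast
qed

lemma scaling_conjugators_root_of_unity:
  fixes z :: "'a::field^'n^'n"
  assumes "invertible z" "p \<in> scaling_conjugators z c"
  shows "c ^ CARD('n) = 1"
proof -
  have p: "invertible p" "p ** z = mat c ** z ** p"
    using assms(2) by (auto simp: scaling_conjugators_def)
  have "det p * det z = c ^ CARD('n) * det z * det p"
    using arg_cong[OF p(2), of det] by (simp add: det_mul det_mat)
  moreover have "det p \<noteq> 0" "det z \<noteq> 0"
    using assms(1) p(1) invertible_det_nz by auto
  ultimately show ?thesis by simp
qed

lemma scaling_conjugators_cube_root_of_unity:
  fixes z :: "'a::field^3^3"
  assumes "invertible z" "p \<in> scaling_conjugators z c"
  shows "c ^ 3 = 1"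
  using scaling_conjugators_root_of_unity[OF assms] by simp

lemma scaling_conjugators_square:
  "p \<in> scaling_conjugators z c \<Longrightarrow> p ** p \<in> scaling_conjugators z (c ^ 2)"
  using scaling_conjugators_mult[of p z c p c] by (simp add: power2_eq_square)

lemma scaling_conjugators_char_root:
  fixes z :: "'a::field^3^3"
  assumes "p \<in> scaling_conjugators z c" "char_root z a"
  shows "char_root z (c * a)"
proof -
  have p: "invertible p" "p ** z = mat c ** z ** p"
    using assms(1) by (auto simp: scaling_conjugators_def)
  have "p ** (mat (c * a) - z) = mat (c * a) ** p - mat c ** z ** p"
    by (simp add: matrix_diff_ldistrib p(2) flip: mat_matrix_mul_commute)
  also have "\<dots> = mat c ** (mat a - z) ** p"
    by (simp add: matrix_diff_ldistrib matrix_diff_rdistrib mat_mult_mat)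
  finally have "p ** (mat (c * a) - z) = mat c ** (mat a - z) ** p" .
  then have "det (p ** (mat (c * a) - z)) = det (mat c ** (mat a - z) ** p)"
    by (rule arg_cong)
  then have "det p * det (mat (c * a) - z) = det (mat c :: 'a^3^3) * det (mat a - z) * det p"
    unfolding det_mul .
  moreover have "det p \<noteq> 0" using p(1) invertible_det_nz by blast
  ultimately show ?thesis
    using assms(2) by (simp add: char_root_def)
qed

lemma scaling_conjugators_coset:
  fixes z :: "'a::field^'n^'n"
  assumes "invertible z" and g: "g \<in> scaling_conjugators z c"
  shows "(\<lambda>h. g ** h) ` scaling_conjugators z 1 = scaling_conjugators z c"
proof
  show "(\<lambda>h. g ** h) ` scaling_conjugators z 1 \<subseteq> scaling_conjugators z c"
    using scaling_conjugators_mult[OF g] by fastforce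
next
  have "c ^ CARD('n) = 1" using scaling_conjugators_root_of_unity[OF assms] .
  then have "c \<noteq> 0"
    by (auto simp: power_0_left)
  have g_inv: "invertible g" using g by (simp add: scaling_conjugators_def)
  show "scaling_conjugators z c \<subseteq> (\<lambda>h. g ** h) ` scaling_conjugators z 1"
  proof
    fix h assume h: "h \<in> scaling_conjugators z c"
    have "matrix_inv g ** h \<in> scaling_conjugators z (inverse c * c)"
      by (rule scaling_conjugators_mult[OF scaling_conjugators_inverse[OF g \<open>c \<noteq> 0\<close>] h])
    then have "matrix_inv g ** h \<in> scaling_conjugators z 1"
      using \<open>c \<noteq> 0\<close> by simp
    moreover have "h = g ** (matrix_inv g ** h)"
      by (simp add: matrix_mul_assoc matrix_inv_right[OF g_inv])
    ultimately show "h \<in> (\<lambda>h. g ** h) ` scaling_conjugators z 1"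
      by (rule rev_image_eqI)
  qed
qed

lemma cube_root_of_unity_cases:
  fixes e c :: "'a::field"
  assumes "e ^ 3 = 1" "e \<noteq> 1" "c ^ 3 = 1"
  shows "c = 1 \<or> c = e \<or> c = e ^ 2"
proof -
  have "(e - 1) * (1 + e + e ^ 2) = e ^ 3 - 1"
    by (simp add: algebra_simps power2_eq_square power3_eq_cube)
  then have sum_zero: "1 + e + e ^ 2 = 0"
    using assms(1,2) by simp
  have "(c - 1) * (c - e) * (c - e ^ 2)
      = c ^ 3 - (1 + e + e ^ 2) * c ^ 2 + (1 + e + e ^ 2) * e * c - e ^ 3"
    by (simp add: algebra_simps power2_eq_square power3_eq_cube)
  also have "\<dots> = 0"
    using sum_zero assms(1,3) by simp
  finally show ?thesis by auto
qed

lemma primitive_cube_root_powers_distinct: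
  fixes e :: "'a::field"
  assumes "e ^ 3 = 1" "e \<noteq> 1"
  shows "e \<noteq> 0" "e ^ 2 \<noteq> 1" "e ^ 2 \<noteq> e"
proof -
  show "e \<noteq> 0" using assms(1) by auto
  show "e ^ 2 \<noteq> 1"
  proof
    assume "e ^ 2 = 1"
    then have "e ^ 3 = e" by (simp add: power3_eq_cube power2_eq_square)
    then show False using assms by simp
  qed
  show "e ^ 2 \<noteq> e"
  proof
    assume "e ^ 2 = e"
    then have "e = 1" using \<open>e \<noteq> 0\<close> by (simp add: power2_eq_square)
    then show False using assms(2) by simp
  qed
qed

lemma CHAR_ne_3_if_primitive_cube_root:
  fixes e :: "'a::field"
  assumes "e ^ 3 = 1" "e \<noteq> 1"
  shows "CHAR('a) \<noteq> 3"
proof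
  assume "CHAR('a) = 3"
  then have three: "(of_nat 3 :: 'a) = 0" by (metis of_nat_CHAR)
  have "(e - 1) ^ 3 = e ^ 3 - of_nat 3 * e ^ 2 + of_nat 3 * e - 1"
    by (simp add: algebra_simps power2_eq_square power3_eq_cube)
  then have "(e - 1) ^ 3 = 0"
    using three assms(1) by simp
  then show False using assms(2) by simp
qed

lemma Gz_eq_Union_scaling_conjugators: "Gz z = (\<Union>c. scaling_conjugators z c)"
proof -
  have "p \<in> Gz z \<longleftrightarrow> p \<in> (\<Union>c. scaling_conjugators z c)" for p
    by (cases "invertible p")
      (simp_all add: Gz_def GL3_def scaling_conjugators_def conjugate_eq_iff)
  then show ?thesis by blast
qed

lemma centralizer3_eq_scaling_conjugators: "centralizer3 z = scaling_conjugators z 1"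
  by (auto simp: centralizer3_def GL3_def scaling_conjugators_def)

lemma subgroup3_centralizer3_Gz: "subgroup3 (centralizer3 z) (Gz z)"
  using scaling_conjugators_one scaling_conjugators_mult[of _ z 1 _ 1]
    scaling_conjugators_inverse[of _ z 1]
  by (auto simp: subgroup3_def centralizer3_eq_scaling_conjugators Gz_eq_Union_scaling_conjugators)

lemma left_cosets_centralizer3:
  fixes z :: "'a::field^3^3"
  assumes "invertible z" "p \<in> scaling_conjugators z e" "e \<noteq> 1"
  shows "{(\<lambda>h. g ** h) ` centralizer3 z | g. g \<in> Gz z} = scaling_conjugators z ` {1, e, e ^ 2}"
proof (intro equalityI subsetI)
  fix X
  assume "X \<in> {(\<lambda>h. g ** h) ` centralizer3 z | g. g \<in> Gz z}"
  then obtain g c where g: "g \<in> scaling_conjugators z c"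
    and X: "X = (\<lambda>h. g ** h) ` scaling_conjugators z 1"
    unfolding centralizer3_eq_scaling_conjugators Gz_eq_Union_scaling_conjugators by auto
  have "c \<in> {1, e, e ^ 2}"
    using cube_root_of_unity_cases[OF scaling_conjugators_cube_root_of_unity[OF assms(1,2)]
        assms(3) scaling_conjugators_cube_root_of_unity[OF assms(1) g]]
    by auto
  then show "X \<in> scaling_conjugators z ` {1, e, e ^ 2}"
    using X scaling_conjugators_coset[OF assms(1) g] by auto
next
  fix X
  assume "X \<in> scaling_conjugators z ` {1, e, e ^ 2}"
  then obtain c g where "X = scaling_conjugators z c" "g \<in> scaling_conjugators z c"
    using scaling_conjugators_one assms(2) scaling_conjugators_square[OF assms(2)] by auto
  then show "X \<in> {(\<lambda>h. g ** h) ` centralizer3 z | g. g \<in> Gz z}"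
    using scaling_conjugators_coset[OF assms(1)]
    unfolding centralizer3_eq_scaling_conjugators Gz_eq_Union_scaling_conjugators by blast
qed

lemma mat_index_Gz_centralizer3:
  fixes z :: "'a::field^3^3"
  assumes "invertible z" "p \<in> scaling_conjugators z e" "e \<noteq> 1"
  shows "mat_index (Gz z) (centralizer3 z) = 3"
proof -
  have inj: "inj_on (scaling_conjugators z) {1, e, e ^ 2}"
  proof (rule inj_onI)
    fix c d
    assume "c \<in> {1, e, e ^ 2}" "scaling_conjugators z c = scaling_conjugators z d"
    then obtain g where "g \<in> scaling_conjugators z c" "g \<in> scaling_conjugators z d"
      using scaling_conjugators_one assms(2) scaling_conjugators_square[OF assms(2)] by auto
    then show "c = d"
      using scaling_conjugators_unique[OF assms(1)] by blast
  qed
  have card3: "card {1, e, e ^ 2} = 3"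
    using primitive_cube_root_powers_distinct[OF
        scaling_conjugators_cube_root_of_unity[OF assms(1,2)] assms(3)] assms(3)
    by auto
  show ?thesis
    unfolding mat_index_def left_cosets_centralizer3[OF assms] card_image[OF inj] card3 ..
qed

lemma char_roots_ratio_primitive_cube_root:
  fixes z :: "'a::alg_closed_field^3^3"
  assumes "invertible z" "p \<in> scaling_conjugators z e" "e \<noteq> 1"
  shows "\<exists>a1 a2 a3 e. char_root z a1 \<and> char_root z a2 \<and> char_root z a3
            \<and> a1 \<noteq> a2 \<and> a2 \<noteq> a3 \<and> a1 \<noteq> a3
            \<and> e ^ 3 = 1 \<and> e \<noteq> 1
            \<and> a1 * inverse a2 = e \<and> a2 * inverse a3 = e \<and> a3 * inverse a1 = e"
proof -
  have e3: "e ^ 3 = 1"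
    using scaling_conjugators_cube_root_of_unity[OF assms(1,2)] .
  note e_distinct = primitive_cube_root_powers_distinct[OF e3 assms(3)]
  obtain a where a: "char_root z a"
    using char_root_exists by blast
  have "a \<noteq> 0"
    using char_root_nonzero[OF assms(1) a] .
  show ?thesis
  proof (intro exI conjI)
    show "char_root z (e ^ 2 * a)"
      using scaling_conjugators_char_root[OF scaling_conjugators_square[OF assms(2)] a] .
    show "char_root z (e * a)"
      using scaling_conjugators_char_root[OF assms(2) a] .
    show "char_root z a" "e ^ 3 = 1" "e \<noteq> 1" by fact+
    show "e ^ 2 * a \<noteq> e * a" "e * a \<noteq> a" "e ^ 2 * a \<noteq> a"
      using e_distinct assms(3) \<open>a \<noteq> 0\<close> by simp_all
    show "e ^ 2 * a * inverse (e * a) = e" "e * a * inverse a = e" "a * inverse (e ^ 2 * a) = e"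
      using e_distinct e3 \<open>a \<noteq> 0\<close> by (simp_all add: field_simps power2_eq_square power3_eq_cube)
  qed
qed

theorem lemma4p3:
  fixes z :: "'a::alg_closed_field ^3^3"
  assumes "CHAR('a) \<noteq> 2"
    and "z \<in> GL3"
  shows "Gz z = centralizer3 z
    \<or> (subgroup3 (centralizer3 z) (Gz z) \<and> mat_index (Gz z) (centralizer3 z) = 3
       \<and> CHAR('a) \<noteq> 3
       \<and> (\<exists>a1 a2 a3 e. char_root z a1 \<and> char_root z a2 \<and> char_root z a3
            \<and> a1 \<noteq> a2 \<and> a2 \<noteq> a3 \<and> a1 \<noteq> a3
            \<and> e ^ 3 = 1 \<and> e \<noteq> 1
            \<and> a1 * inverse a2 = e \<and> a2 * inverse a3 = e \<and> a3 * inverse a1 = e))"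
proof -
  have z: "invertible z"
    using assms(2) by (simp add: GL3_def)
  show ?thesis
  proof (cases "\<exists>e p. e \<noteq> 1 \<and> p \<in> scaling_conjugators z e")
    case False
    then have "scaling_conjugators z c \<subseteq> scaling_conjugators z 1" for c
      by (cases "c = 1") auto
    then have "Gz z = centralizer3 z"
      unfolding Gz_eq_Union_scaling_conjugators centralizer3_eq_scaling_conjugators by blast
    then show ?thesis ..
  next
    case True
    then obtain e p where p: "p \<in> scaling_conjugators z e" and "e \<noteq> 1"
      by blast
    then show ?thesis
      using subgroup3_centralizer3_Gz mat_index_Gz_centralizer3[OF z p]
        CHAR_ne_3_if_primitive_cube_root[OF scaling_conjugators_cube_root_of_unity[OF z p]]
        char_roots_ratio_primitive_cube_root[OF z p]
      by blast
  qed
qed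

end
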